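(* Work in the projective model of $\mathbf{Nil}$ geometry described in the context. Let $P_1=(1,0,0,0)$, $P_2=(1,a,b,c)$ and $P_3=(1,d,e,f)$ with $ae-bd\neq0$. Then the translation-like triangular surface $S^{\mathbf{Nil},t}_{P_1,P_2,P_3}$ has the equation \[ z=\frac{xy}{2}+\frac{bde-abe+2ce-2bf}{2(ae-bd)}\,x+\frac{abd-ade+2af-2cd}{2(ae-bd)}\,y . \]
   Context: $\mathbf{Nil}$ is modelled on $\mathbb{R}^3$ with points in homogeneous coordinates $(1,x,y,z)$. For $Q=(1,q_1,q_2,q_3)$ the translation $\mathbf{T}_Q$ acts on row vectors from the right by $\begin{pmatrix}1&q_1&q_2&q_3\\0&1&0&0\\0&0&1&q_1\\0&0&0&1\end{pmatrix}$, i.e. $(1,a,b,c)\mapsto(1,q_1+a,q_2+b,q_3+bq_1+c)$, mapping $E_0=(1,0,0,0)$ to $Q$. A translation curve from $E_0$ with unit initial tangent $(u,v,w)$ is $x(t)=ut,\ y(t)=vt,\ z(t)=\frac12uvt^2+wt$; translation curves from $Q$ are their $\mathbf{T}_Q$-images. The translation-like triangular surface $S^{\mathbf{Nil},t}_{P_1,P_2,P_3}$ is the set of points $P$ such that the tangent vectors at $P$ of the translation curves from $P$ to $P_1$, $P_2$, $P_3$ are coplanar; equivalently, pulling back by $\mathbf{T}_P^{-1}$, such that the initial tangent vectors at $E_0$ of the translation curves from $E_0$ to $\mathbf{T}_P^{-1}(P_1),\mathbf{T}_P^{-1}(P_2),\mathbf{T}_P^{-1}(P_3)$ are linearly dependent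 (for a point $(1,x,y,z)$ a nonzero multiple of this initial tangent is $(x,y,z-\frac{xy}{2})$). *)

theory Defs
  imports "HOL-Analysis.Analysis"
begin

text \<open>Points of Nil are (1,x,y,z) in homogeneous coordinates; we represent them by
  their affine coordinates (x,y,z).\<close>
type_synonym nilpt = "real \<times> real \<times> real"

fun nil_transl :: "nilpt \<Rightarrow> nilpt \<Rightarrow> nilpt" where
  "nil_transl (q1, q2, q3) (a, b, c) = (q1 + a, q2 + b, q3 + b * q1 + c)"

definition transl_curve :: "real^3 \<Rightarrow> real \<Rightarrow> nilpt" where
  "transl_curve \<tau> t = (\<tau>$1 * t, \<tau>$2 * t, 1/2 * \<tau>$1 * \<tau>$2 * t^2 + \<tau>$3 * t)"

definition nil_init_tangents :: "nilpt \<Rightarrow> (real^3) set" where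
  "nil_init_tangents R = {\<tau>. norm \<tau> = 1 \<and> (\<exists>t\<ge>0. transl_curve \<tau> t = R)}"

text \<open>Translation-like triangular surface, in the pulled-back form: P lies on it iff
  the initial tangents at E0 of the translation curves from E0 to T_P^{-1}(P_i)
  are linearly dependent.\<close>
definition nil_transl_surface :: "nilpt \<Rightarrow> nilpt \<Rightarrow> nilpt \<Rightarrow> nilpt set" where
  "nil_transl_surface P1 P2 P3 =
     {P. \<exists>X1 X2 X3 \<tau>1 \<tau>2 \<tau>3.
          nil_transl P X1 = P1 \<and> nil_transl P X2 = P2 \<and> nil_transl P X3 = P3 \<and>
          \<tau>1 \<in> nil_init_tangents X1 \<and> \<tau>2 \<in> nil_init_tangents X2 \<and> \<tau>3 \<in> nil_init_tangents X3 \<and>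
          det (vector [\<tau>1, \<tau>2, \<tau>3] :: real^3^3) = 0}"

end

theory Submission
  imports Defs
begin

text \<open>Pulled back to E0, the translation curve to X = (x,y,z) has initial tangent a
  nonnegative multiple of (x, y, z - xy/2), and every unit vector is an initial tangent when
  X = E0. Hence the tangents are coplanar iff the 3x3 determinant of these three vectors
  vanishes. For P1 = E0 and P = (x,y,z) this determinant is affine in z with
  coefficient -(ae - bd), so the surface is the graph of the stated function.\<close>

fun nil_transl_inv :: "nilpt \<Rightarrow> nilpt \<Rightarrow> nilpt" where
  "nil_transl_inv (x, y, z) (q1, q2, q3) = (q1 - x, q2 - y, q3 - z - (q2 - y) * x)"

lemma nil_transl_eq_iff: "nil_transl P X = Q \<longleftrightarrow> X = nil_transl_inv P Q"
  by (cases P, cases Q, cases X) (auto simp: algebra_simps)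

fun nil_tangent_dir :: "nilpt \<Rightarrow> real^3" where
  "nil_tangent_dir (x, y, z) = vector [x, y, z - x * y / 2]"

lemma nil_tangent_dir_eq_0_iff: "nil_tangent_dir X = 0 \<longleftrightarrow> X = (0, 0, 0)"
  by (cases X) (auto simp: vec_eq_iff forall_3)

lemma transl_curve_eq_iff: "transl_curve \<tau> t = X \<longleftrightarrow> nil_tangent_dir X = t *\<^sub>R \<tau>"
  by (cases X) (auto simp: transl_curve_def vec_eq_iff forall_3 power2_eq_square algebra_simps)

lemma nil_init_tangents_iff:
  "\<tau> \<in> nil_init_tangents X \<longleftrightarrow> norm \<tau> = 1 \<and> (\<exists>t\<ge>0. nil_tangent_dir X = t *\<^sub>R \<tau>)"
  by (simp add: nil_init_tangents_def transl_curve_eq_iff)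

lemma nil_init_tangents_origin: "norm \<tau> = 1 \<Longrightarrow> \<tau> \<in> nil_init_tangents (0, 0, 0)"
  by (auto simp: nil_init_tangents_iff vec_eq_iff forall_3 intro!: exI[of _ 0])

lemma sgn_tangent_dir_in_nil_init_tangents:
  assumes "X \<noteq> (0, 0, 0)"
  shows "sgn (nil_tangent_dir X) \<in> nil_init_tangents X"
proof -
  have "nil_tangent_dir X \<noteq> 0"
    using assms by (simp add: nil_tangent_dir_eq_0_iff)
  then show ?thesis
    by (auto simp: nil_init_tangents_iff norm_sgn sgn_div_norm intro!: exI[of _ "norm (nil_tangent_dir X)"])
qed

lemma nil_init_tangents_nonempty: "\<exists>\<tau>. \<tau> \<in> nil_init_tangents X"
  using nil_init_tangents_origin[of "axis 1 1"] sgn_tangent_dir_in_nil_init_tangents[of X]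
  by (cases "X = (0, 0, 0)") auto

lemma det3_scaleR_rows:
  "det (vector [s *\<^sub>R u, t *\<^sub>R v, r *\<^sub>R w] :: real^3^3) = s * t * r * det (vector [u, v, w] :: real^3^3)"
  by (simp add: det_3 vector_3 algebra_simps)

lemma det3_repeated_row:
  "det (vector [u, u, w] :: real^3^3) = 0"
  "det (vector [u, v, u] :: real^3^3) = 0"
  "det (vector [u, v, v] :: real^3^3) = 0"
  by (simp_all add: det_3 vector_3 algebra_simps)

lemma ex_init_tangents_det_eq_0_iff:
  "(\<exists>\<tau>1 \<tau>2 \<tau>3. \<tau>1 \<in> nil_init_tangents X1 \<and> \<tau>2 \<in> nil_init_tangents X2 \<and>
       \<tau>3 \<in> nil_init_tangents X3 \<and> det (vector [\<tau>1, \<tau>2, \<tau>3] :: real^3^3) = 0) \<longleftrightarrow>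
   det (vector [nil_tangent_dir X1, nil_tangent_dir X2, nil_tangent_dir X3] :: real^3^3) = 0"
  (is "?tangents \<longleftrightarrow> ?dirs")
proof
  assume ?tangents
  then obtain \<tau>1 \<tau>2 \<tau>3 t1 t2 t3 where
    "nil_tangent_dir X1 = t1 *\<^sub>R \<tau>1" "nil_tangent_dir X2 = t2 *\<^sub>R \<tau>2"
    "nil_tangent_dir X3 = t3 *\<^sub>R \<tau>3" "det (vector [\<tau>1, \<tau>2, \<tau>3] :: real^3^3) = 0"
    by (auto simp: nil_init_tangents_iff)
  then show ?dirs
    by (simp add: det3_scaleR_rows)
next
  assume dirs: ?dirs
  obtain \<tau>1 \<tau>2 \<tau>3 where \<tau>:
    "\<tau>1 \<in> nil_init_tangents X1" "\<tau>2 \<in> nil_init_tangents X2" "\<tau>3 \<in> nil_init_tangents X3"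
    using nil_init_tangents_nonempty by metis
  have "norm \<tau>1 = 1" "norm \<tau>2 = 1"
    using \<tau> by (simp_all add: nil_init_tangents_iff)
  then have origin: "\<tau>1 \<in> nil_init_tangents (0, 0, 0)" "\<tau>2 \<in> nil_init_tangents (0, 0, 0)"
    by (simp_all add: nil_init_tangents_origin)
  show ?tangents
  proof (cases "X1 = (0, 0, 0) \<or> X2 = (0, 0, 0) \<or> X3 = (0, 0, 0)")
    case True
    then show ?thesis
      using \<tau> origin det3_repeated_row by blast
  next
    case False
    have "det (vector [sgn (nil_tangent_dir X1), sgn (nil_tangent_dir X2), sgn (nil_tangent_dir X3)]
            :: real^3^3) = 0"
      using dirs by (simp add: sgn_div_norm det3_scaleR_rows)
    then show ?thesis
      using False sgn_tangent_dir_in_nil_init_tangents by blast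
  qed
qed

lemma nil_transl_surface_iff:
  "P \<in> nil_transl_surface P1 P2 P3 \<longleftrightarrow>
   det (vector [nil_tangent_dir (nil_transl_inv P P1), nil_tangent_dir (nil_transl_inv P P2),
                nil_tangent_dir (nil_transl_inv P P3)] :: real^3^3) = 0"
  unfolding nil_transl_surface_def mem_Collect_eq nil_transl_eq_iff
  by (simp add: ex_init_tangents_det_eq_0_iff[symmetric])

lemma det_tangent_dirs_from_origin:
  "det (vector [nil_tangent_dir (nil_transl_inv (x, y, z) (0, 0, 0)),
                nil_tangent_dir (nil_transl_inv (x, y, z) (a, b, c)),
                nil_tangent_dir (nil_transl_inv (x, y, z) (d, e, f))] :: real^3^3)
   = ((b*d*e - a*b*e + 2*c*e - 2*b*f) * x + (a*b*d - a*d*e + 2*a*f - 2*c*d) * y) / 2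
     - (a*e - b*d) * (z - x * y / 2)"
  by (simp add: det_3 vector_3 field_simps)

lemma graph_eq_iff:
  fixes D \<alpha> \<beta> x y z :: real
  assumes "D \<noteq> 0"
  shows "z = x * y / 2 + \<alpha> / (2 * D) * x + \<beta> / (2 * D) * y \<longleftrightarrow>
         (\<alpha> * x + \<beta> * y) / 2 - D * (z - x * y / 2) = 0"
  using assms by (auto simp: field_simps)

theorem lemma4p6:
  fixes a b c d e f :: real
  assumes "a * e - b * d \<noteq> 0"
  shows "nil_transl_surface (0, 0, 0) (a, b, c) (d, e, f) =
    {(x, y, z). z = x * y / 2
       + (b*d*e - a*b*e + 2*c*e - 2*b*f) / (2 * (a*e - b*d)) * x
       + (a*b*d - a*d*e + 2*a*f - 2*c*d) / (2 * (a*e - b*d)) * y}"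
  unfolding set_eq_iff split_paired_All mem_Collect_eq case_prod_conv
  by (simp only: nil_transl_surface_iff det_tangent_dirs_from_origin graph_eq_iff[OF assms] simp_thms)

end
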